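(* Let $P$ be a convex pentagon whose sides are parallel to the sides of $K$ (so all its interior angles equal $3\pi/5$), with heights $m_1,\dots,m_5$. If there are indices $i,j$ with $j\equiv i\pm1\pmod 5$ such that $m_i\ge m_l$ and $m_j\ge m_l$ for every $l\notin\{i,j\}$ (i.e. the two largest heights are adjacent), then $P$ is a regular pentagon.
   Context: $K\subset\mathbb R^2$ is the regular pentagon with circumradius $1$, centroid at the origin and $(0,1)$ a vertex; $v_1,\dots,v_5$ are the position vectors of its vertices in counterclockwise order. For a compact convex set $L$, its $i$th height is $m_i=\max_{x\in L}\langle x,v_i\rangle-\min_{x\in L}\langle x,v_i\rangle$. Indices are taken mod $5$. *)

theory Defs
  imports "HOL-Analysis.Analysis"
begin

(* Vertices of K, indexed 0..4 (index k here = index k+1 in the paper);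
   vK 0 = (0,1), counterclockwise, circumradius 1, centroid 0. *)
definition vK :: "nat \<Rightarrow> real^2" where
  "vK k = vector [- sin (2 * pi * real k / 5), cos (2 * pi * real k / 5)]"

definition Kpent :: "(real^2) set" where
  "Kpent = convex hull (vK ` {..<5})"

definition height :: "(real^2) set \<Rightarrow> nat \<Rightarrow> real" where
  "height L i = (SUP x\<in>L. inner x (vK i)) - (INF x\<in>L. inner x (vK i))"

(* Convex pentagon whose sides are parallel to the sides of K, with all interior
   angles 3pi/5: vertices p 0..p 4 in order, the edge p k -> p (k+1) being a positive
   multiple of the edge vK k -> vK (k+1) (s = 1, same orientation as K) or of its
   negative (s = -1, orientation of -K). *)
definition parallel_pentagon :: "(real^2) set \<Rightarrow> bool" where
  "parallel_pentagon P \<longleftrightarrow>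
     (\<exists>p :: nat \<Rightarrow> real^2. \<exists>t :: nat \<Rightarrow> real. \<exists>s :: real.
        (s = 1 \<or> s = -1) \<and>
        (\<forall>k<5. t k > 0 \<and>
            p (Suc k mod 5) - p k = (s * t k) *\<^sub>R (vK (Suc k mod 5) - vK k)) \<and>
        P = convex hull (p ` {..<5}))"

definition regular_pentagon :: "(real^2) set \<Rightarrow> bool" where
  "regular_pentagon P \<longleftrightarrow>
     (\<exists>c :: real^2. \<exists>R \<theta> :: real. R > 0 \<and>
        P = convex hull ((\<lambda>k. c + R *\<^sub>R vector [cos (\<theta> + 2 * pi * real k / 5),
                                                  sin (\<theta> + 2 * pi * real k / 5)]) ` {..<5}))"

end

theory Submission
  imports Defs
begin

(* Write the sides of the pentagon as s * tau k * (vK (k+1) - vK k) with tau k > 0 and a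
   global orientation s = +1 or -1.  Projecting the boundary onto vK l shows that the
   projection drops by dA * tau l and dB * tau (l+1) along the sides l and l+1, stays
   constant along side l+2, and rises by dB * tau (l+3) and dA * tau (l+4) along the last two
   sides.  This gives both the height formula H l = dA * tau l + dB * tau (l+1) and the
   closing condition H l = dB * tau (l+3) + dA * tau (l+4) (lemmas height_pentagon and
   closing_condition, proved in the locale cyclic_pentagon for periodically indexed
   data).  A linear identity derived from two closing conditions
   (heights_balance) shows that two adjacent maximal heights force all heights to be
   equal, equal heights force equal sides (equal_sides_of_equal_heights), and a
   pentagon with equal sides parallel to K is a homothetic image of K
   (with ratio +T or -T), hence regular (regular_if_equal_sides). *)

lemma cos_fifth_bounds: "0 < cos (2 * pi / 5)" "cos (2 * pi / 5) < 1"
proof -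
  show "0 < cos (2 * pi / 5)" by (rule cos_gt_zero_pi) (use pi_gt_zero in linarith)+
  have "cos (2 * pi / 5) < cos 0"
    by (subst cos_mono_less_eq) (use pi_gt_zero in auto)
  thus "cos (2 * pi / 5) < 1" by simp
qed

(* c is a root of 4c^2 + 2c - 1, obtained from cos (3x) = cos (2x) at x = 2*pi/5. *)
lemma cos_fifth_quadratic: "4 * cos (2 * pi / 5) ^ 2 + 2 * cos (2 * pi / 5) - 1 = 0"
proof -
  let ?c = "cos (2 * pi / 5)"
  have "cos (6 * pi / 5) = cos (4 * pi / 5)"
    using cos_2pi_minus[of "4 * pi / 5"] by (simp add: field_simps)
  hence "4 * ?c ^ 3 - 3 * ?c = 2 * ?c ^ 2 - 1"
    using cos_treble_cos[of "2 * pi / 5"] cos_double_cos[of "2 * pi / 5"] by simp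
  hence "(?c - 1) * (4 * ?c ^ 2 + 2 * ?c - 1) = 0"
    by (simp add: algebra_simps power2_eq_square power3_eq_cube)
  thus ?thesis using cos_fifth_bounds by simp
qed

(* Moving along the sides l and l + 1 of the pentagon, the projection onto vK l drops
   by dA resp. dB per unit of the parameter t (see projection_profile below). *)
definition dA :: real where "dA = 1 - cos (2 * pi / 5)"
definition dB :: real where "dB = 1/2 + 2 * cos (2 * pi / 5)"

lemma dA_pos: "0 < dA" and dB_pos: "0 < dB"
  using cos_fifth_bounds by (simp_all add: dA_def dB_def)

lemma dB_eq: "dB = 5/2 - 2 * dA"
  by (simp add: dA_def dB_def)

lemma dA_quadratic: "4 * dA ^ 2 - 10 * dA + 5 = 0"
  using cos_fifth_quadratic by (simp add: dA_def power2_eq_square algebra_simps)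

lemma cos_fifths:
  "cos (2 * pi / 5) = 1 - dA"
  "cos (4 * pi / 5) = 1 - dA - dB"
  "cos (6 * pi / 5) = 1 - dA - dB"
  "cos (8 * pi / 5) = 1 - dA"
proof -
  have four: "cos (4 * pi / 5) = 1 - dA - dB"
    using cos_double_cos[of "2 * pi / 5"] cos_fifth_quadratic
    by (simp add: dA_def dB_def algebra_simps)
  show "cos (2 * pi / 5) = 1 - dA" by (simp add: dA_def)
  show "cos (4 * pi / 5) = 1 - dA - dB" by (fact four)
  show "cos (6 * pi / 5) = 1 - dA - dB"
    using cos_2pi_minus[of "4 * pi / 5"] four by (simp add: field_simps)
  show "cos (8 * pi / 5) = 1 - dA"
    using cos_2pi_minus[of "2 * pi / 5"] by (simp add: dA_def field_simps)
qed

lemma vK_shift5: "vK (k + 5) = vK k"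
proof -
  have "2 * pi * real (k + 5) / 5 = 2 * pi * real k / 5 + 2 * pi"
    by (simp add: field_simps)
  thus ?thesis unfolding vK_def by (simp only: sin_periodic cos_periodic)
qed

lemma vK_mod: "vK (k mod 5) = vK k"
proof -
  have "vK (n + 5 * j) = vK n" for n j
  proof (induction j)
    case (Suc j)
    have "vK (n + 5 * Suc j) = vK (n + 5 * j + 5)" by (simp add: algebra_simps)
    with Suc show ?case by (simp only: vK_shift5)
  qed simp
  from this[of "k mod 5" "k div 5"] show ?thesis by simp
qed

lemma inner_vK: "inner (vK (l + m)) (vK l) = cos (2 * pi * real m / 5)"
proof -
  have "inner (vK (l + m)) (vK l) = cos (2 * pi * real (l + m) / 5 - 2 * pi * real l / 5)"
    by (simp add: vK_def inner_vec_def sum_2 cos_diff)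
  thus ?thesis by (simp add: field_simps)
qed

lemma mod5_reach: "(l + (k + 4 * l) mod 5) mod 5 = k mod (5::nat)"
  by presburger

lemma height_convex_hull:
  fixes S :: "(real^2) set"
  assumes "a \<in> S" "b \<in> S"
    and "\<forall>x\<in>S. inner b (vK l) \<le> inner x (vK l) \<and> inner x (vK l) \<le> inner a (vK l)"
  shows "height (convex hull S) l = inner a (vK l) - inner b (vK l)"
proof -
  let ?slab = "{x. inner (vK l) x \<le> inner a (vK l)} \<inter> {x. inner (vK l) x \<ge> inner b (vK l)}"
  have "convex ?slab"
    by (intro convex_Int convex_halfspace_le convex_halfspace_ge)
  hence "convex hull S \<subseteq> ?slab"
    by (rule hull_minimal[rotated]) (use assms(3) in \<open>auto simp: inner_commute\<close>)
  moreover have "a \<in> convex hull S" "b \<in> convex hull S"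
    using assms(1,2) hull_subset[of S convex] by auto
  ultimately have "(SUP x\<in>convex hull S. inner x (vK l)) = inner a (vK l)"
    and "(INF x\<in>convex hull S. inner x (vK l)) = inner b (vK l)"
    by (auto simp: inner_commute intro!: cSup_eq_maximum cInf_eq_minimum)
  thus ?thesis by (simp add: height_def)
qed

lemma height_from_profile:
  fixes S :: "(real^2) set"
  assumes "s = 1 \<or> s = -1" "a \<in> S" "b \<in> S"
    and "inner b (vK l) = inner a (vK l) - s * H"
    and "\<And>x. x \<in> S \<Longrightarrow> \<exists>w. 0 \<le> w \<and> w \<le> H \<and> inner x (vK l) = inner a (vK l) - s * w"
  shows "height (convex hull S) l = H"
  using assms(1)
proof
  assume "s = 1"
  hence "height (convex hull S) l = inner a (vK l) - inner b (vK l)"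
    using assms(5) by (intro height_convex_hull[OF assms(2,3)]) (fastforce simp: assms(4))
  thus ?thesis using \<open>s = 1\<close> assms(4) by simp
next
  assume "s = -1"
  hence "height (convex hull S) l = inner b (vK l) - inner a (vK l)"
    using assms(5) by (intro height_convex_hull[OF assms(3,2)]) (fastforce simp: assms(4))
  thus ?thesis using \<open>s = -1\<close> assms(4) by simp
qed

lemma height_mod: "height L (k mod 5) = height L k"
  by (simp add: height_def vK_mod)

definition height_of_sides :: "(nat \<Rightarrow> real) \<Rightarrow> nat \<Rightarrow> real" where
  "height_of_sides \<tau> l = dA * \<tau> l + dB * \<tau> (l + 1)"

locale cyclic_pentagon =
  fixes q :: "nat \<Rightarrow> real^2" and \<tau> :: "nat \<Rightarrow> real" and s :: real
  assumes orientation: "s = 1 \<or> s = -1"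
    and side_pos: "0 < \<tau> k"
    and side_mod: "\<tau> (k mod 5) = \<tau> k"
    and vertex_mod: "q (k mod 5) = q k"
    and edge: "q (Suc k) - q k = (s * \<tau> k) *\<^sub>R (vK (Suc k) - vK k)"
begin

lemma projection_step:
  "inner (q (l + Suc m)) (vK l) = inner (q (l + m)) (vK l)
     + s * \<tau> (l + m) * (cos (2 * pi * real (Suc m) / 5) - cos (2 * pi * real m / 5))"
proof -
  have "inner (q (l + Suc m)) (vK l) - inner (q (l + m)) (vK l)
        = s * \<tau> (l + m) * (inner (vK (l + Suc m)) (vK l) - inner (vK (l + m)) (vK l))"
    using arg_cong[OF edge[of "l + m"], of "\<lambda>x. inner x (vK l)"]
    by (simp add: inner_diff_left)
  thus ?thesis unfolding inner_vK by linarith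
qed

(* The projections of the five vertices q l, ..., q (l+4) onto vK l.  The last
   equation expresses that the boundary closes up after five sides. *)
lemma projection_profile:
  fixes l :: nat
  defines "\<phi> \<equiv> \<lambda>m. inner (q (l + m)) (vK l)"
  shows "\<phi> 1 = \<phi> 0 - s * (dA * \<tau> l)"
    and "\<phi> 2 = \<phi> 0 - s * height_of_sides \<tau> l"
    and "\<phi> 3 = \<phi> 0 - s * height_of_sides \<tau> l"
    and "\<phi> 4 = \<phi> 0 - s * (height_of_sides \<tau> l - dB * \<tau> (l + 3))"
    and "\<phi> 0 = \<phi> 0 - s * (height_of_sides \<tau> l - dB * \<tau> (l + 3) - dA * \<tau> (l + 4))"
proof -
  have "q (l + 5) = q l"
    using vertex_mod[of "l + 5"] vertex_mod[of l] by simp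
  hence wrap: "\<phi> 5 = \<phi> 0" by (simp add: \<phi>_def)
  note steps = projection_step[of l 0] projection_step[of l 1] projection_step[of l 2]
    projection_step[of l 3] projection_step[of l 4]
  note steps' = steps[simplified, unfolded cos_fifths]
  show "\<phi> 1 = \<phi> 0 - s * (dA * \<tau> l)"
    using steps' by (simp add: \<phi>_def algebra_simps)
  show "\<phi> 2 = \<phi> 0 - s * height_of_sides \<tau> l"
    using steps' by (simp add: \<phi>_def algebra_simps height_of_sides_def)
  show "\<phi> 3 = \<phi> 0 - s * height_of_sides \<tau> l"
    using steps' by (simp add: \<phi>_def algebra_simps height_of_sides_def)
  show "\<phi> 4 = \<phi> 0 - s * (height_of_sides \<tau> l - dB * \<tau> (l + 3))"
    using steps' by (simp add: \<phi>_def algebra_simps height_of_sides_def)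
  show "\<phi> 0 = \<phi> 0 - s * (height_of_sides \<tau> l - dB * \<tau> (l + 3) - dA * \<tau> (l + 4))"
    using steps' wrap by (simp add: \<phi>_def algebra_simps height_of_sides_def)
qed

lemma closing_condition: "height_of_sides \<tau> l = dB * \<tau> (l + 3) + dA * \<tau> (l + 4)"
  using projection_profile(5)[of l] orientation by auto

(* The l-th height of the pentagon: the projection is maximal at q l and minimal at
   q (l+2) (or the other way round, for s = -1). *)
lemma height_pentagon: "height (convex hull (q ` {..<5})) l = height_of_sides \<tau> l"
proof (rule height_from_profile[OF orientation])
  let ?H = "height_of_sides \<tau> l"
  have pos: "0 < dA * \<tau> k" "0 < dB * \<tau> k" for k
    using dA_pos dB_pos side_pos by simp_all
  show "q l \<in> q ` {..<5}" "q (l + 2) \<in> q ` {..<5}"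
    using vertex_mod[of l] vertex_mod[of "l + 2"] by (metis image_eqI lessThan_iff mod_less_divisor zero_less_numeral)+
  show "inner (q (l + 2)) (vK l) = inner (q l) (vK l) - s * ?H"
    using projection_profile(2)[of l] by simp
  fix x assume "x \<in> q ` {..<5}"
  then obtain k where x: "x = q k" by blast
  define m where "m = (k + 4 * l) mod 5"
  have "q k = q (l + m)"
    using vertex_mod[of k] vertex_mod[of "l + m"] mod5_reach[of l k] by (simp add: m_def)
  moreover have "m < 5" by (simp add: m_def)
  hence "m = 0 \<or> m = 1 \<or> m = 2 \<or> m = 3 \<or> m = 4" by auto
  ultimately have "\<exists>w\<in>{0, dA * \<tau> l, ?H, ?H - dB * \<tau> (l + 3)}.
      inner x (vK l) = inner (q l) (vK l) - s * w"
    using projection_profile[of l] unfolding x by (elim disjE) simp_all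
  moreover have "0 \<le> w \<and> w \<le> ?H" if "w \<in> {0, dA * \<tau> l, ?H, ?H - dB * \<tau> (l + 3)}" for w
    using that closing_condition[of l] pos[of l] pos[of "Suc l"] pos[of "l + 3"] pos[of "l + 4"]
    unfolding height_of_sides_def by auto
  ultimately show "\<exists>w. 0 \<le> w \<and> w \<le> ?H \<and> inner x (vK l) = inner (q l) (vK l) - s * w"
    by blast
qed

(* Equal sides: the vertices are c + s*T*vK k, i.e. a rotated scaled copy of K. *)
lemma regular_if_equal_sides:
  assumes equal: "\<And>k. \<tau> k = \<tau> 0"
  shows "regular_pentagon (convex hull (q ` {..<5}))"
proof -
  define T where "T = \<tau> 0"
  define c where "c = q 0 - (s * T) *\<^sub>R vK 0"
  define \<theta> where "\<theta> = s * pi / 2"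
  have vertex: "q k = c + (s * T) *\<^sub>R vK k" for k
  proof (induction k)
    case (Suc k)
    have "q (Suc k) = q k + (s * T) *\<^sub>R (vK (Suc k) - vK k)"
      using edge[of k] equal[of k] by (simp add: T_def algebra_simps)
    with Suc show ?case by (simp add: algebra_simps)
  qed (simp add: c_def)
  have direction: "vector [cos (\<theta> + x), sin (\<theta> + x)] = s *\<^sub>R (vector [- sin x, cos x] :: real^2)"
    for x
    using orientation by (auto simp: \<theta>_def cos_add sin_add vec_eq_iff forall_2)
  have "(\<lambda>k. c + T *\<^sub>R vector [cos (\<theta> + 2 * pi * real k / 5), sin (\<theta> + 2 * pi * real k / 5)])
        = q"
    by (auto simp: direction vertex vK_def)
  moreover have "0 < T" using side_pos by (simp add: T_def)
  ultimately show ?thesis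
    unfolding regular_pentagon_def by (metis (no_types, lifting))
qed

end

lemma parallel_pentagon_cyclic:
  assumes "parallel_pentagon P"
  obtains q \<tau> s where "cyclic_pentagon q \<tau> s" and "P = convex hull (q ` {..<5})"
proof -
  obtain p t and s :: real where
    orientation: "s = 1 \<or> s = -1"
    and sides: "\<forall>k<5. t k > 0 \<and> p (Suc k mod 5) - p k = (s * t k) *\<^sub>R (vK (Suc k mod 5) - vK k)"
    and P: "P = convex hull (p ` {..<5})"
    using assms unfolding parallel_pentagon_def by blast
  define q where "q k = p (k mod 5)" for k
  define \<tau> where "\<tau> k = t (k mod 5)" for k
  have "cyclic_pentagon q \<tau> s"
  proof
    fix k
    have edge: "p (Suc (k mod 5) mod 5) - p (k mod 5)
        = (s * t (k mod 5)) *\<^sub>R (vK (Suc (k mod 5) mod 5) - vK (k mod 5))"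
      and "0 < t (k mod 5)"
      using sides by simp_all
    thus "0 < \<tau> k" by (simp add: \<tau>_def)
    show "q (Suc k) - q k = (s * \<tau> k) *\<^sub>R (vK (Suc k) - vK k)"
      using edge by (simp add: q_def \<tau>_def mod_Suc_eq vK_mod)
  qed (simp_all add: orientation q_def \<tau>_def)
  moreover have "p ` {..<5} = q ` {..<5}"
    by (auto simp: q_def)
  ultimately show ?thesis using that P by simp
qed

lemma heights_balance:
  fixes \<tau> :: "nat \<Rightarrow> real"
  defines "H \<equiv> height_of_sides \<tau>"
  assumes period: "\<tau> 5 = \<tau> 0"
    and closure: "\<And>l. H l = dB * \<tau> (l + 3) + dA * \<tau> (l + 4)"
  shows "dA * ((H 0 - H 2) + (H 1 - H 4)) + dB * ((H 0 - H 3) + (H 1 - H 3)) = 0"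
proof -
  have "dA * \<tau> 0 + dB * \<tau> 1 = dB * \<tau> 3 + dA * \<tau> 4"
    and "dA * \<tau> 1 + dB * \<tau> 2 = dB * \<tau> 4 + dA * \<tau> 0"
    using closure[of 0] closure[of 1] period by (simp_all add: H_def height_of_sides_def eval_nat_numeral)
  thus ?thesis
    using dB_eq dA_quadratic period unfolding H_def height_of_sides_def
    by (simp add: eval_nat_numeral) algebra
qed

lemma equal_heights_of_adjacent_maxima:
  fixes \<tau> :: "nat \<Rightarrow> real"
  defines "H \<equiv> height_of_sides \<tau>"
  assumes period: "\<tau> 5 = \<tau> 0"
    and closure: "\<And>l. H l = dB * \<tau> (l + 3) + dA * \<tau> (l + 4)"
    and maxima: "\<And>m. m \<in> {2, 3, 4} \<Longrightarrow> H m \<le> H 0 \<and> H m \<le> H 1"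
    and "m < 5"
  shows "H m = H 0"
proof -
  have balance: "dA * (H 0 - H 2) + dA * (H 1 - H 4) + dB * (H 0 - H 3) + dB * (H 1 - H 3) = 0"
    using heights_balance[of \<tau>] period closure unfolding H_def by (simp add: algebra_simps)
  have "0 \<le> dA * (H 0 - H 2)" "0 \<le> dA * (H 1 - H 4)" "0 \<le> dB * (H 0 - H 3)" "0 \<le> dB * (H 1 - H 3)"
    using maxima[of 2] maxima[of 3] maxima[of 4] dA_pos dB_pos by simp_all
  hence "dA * (H 0 - H 2) = 0" "dA * (H 1 - H 4) = 0" "dB * (H 0 - H 3) = 0" "dB * (H 1 - H 3) = 0"
    using balance by linarith+
  hence "H 2 = H 0" "H 4 = H 1" "H 3 = H 0" "H 3 = H 1"
    using dA_pos dB_pos by simp_all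
  moreover have "m = 0 \<or> m = 1 \<or> m = 2 \<or> m = 3 \<or> m = 4" using \<open>m < 5\<close> by auto
  ultimately show ?thesis by auto
qed

(* Equal heights force equal sides: the differences d k = tau k - tau (k+1) satisfy
   d (k+1) = -r * d k with r > 0, and 5-periodicity gives (1 + r^5) * d 0 = 0. *)
lemma equal_sides_of_equal_heights:
  fixes \<tau> :: "nat \<Rightarrow> real"
  assumes periodic: "\<And>k. \<tau> (k mod 5) = \<tau> k"
    and equal: "\<And>l. height_of_sides \<tau> (Suc l) = height_of_sides \<tau> l"
  shows "\<tau> k = \<tau> 0"
proof -
  define d where "d k = \<tau> k - \<tau> (Suc k)" for k
  define r where "r = dA / dB"
  have recur: "d (Suc k) = - r * d k" for k
  proof -
    have "dA * d k + dB * d (Suc k) = 0"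
      using equal[of k] by (simp add: d_def height_of_sides_def algebra_simps)
    thus ?thesis using dB_pos by (simp add: r_def field_simps)
  qed
  have power: "d k = (- r) ^ k * d 0" for k
    by (induction k) (simp_all add: recur)
  have "d 5 = d 0"
    using periodic[of 5] periodic[of 6] by (simp add: d_def)
  hence "(1 + r ^ 5) * d 0 = 0"
    using power[of 5] by (simp add: algebra_simps)
  moreover have "0 < 1 + r ^ 5"
    using dA_pos dB_pos by (simp add: r_def add_pos_pos)
  ultimately have "d k = 0" for k
    using power[of k] by simp
  thus ?thesis
    by (induction k) (simp_all add: d_def)
qed

(* The combination of the two previous lemmas for adjacent maxima at i, i+1,
   reduced to i = 0 by shifting the side sequence. *)
lemma equal_sides_of_adjacent_maxima:
  fixes \<tau> :: "nat \<Rightarrow> real" and i :: nat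
  defines "H \<equiv> height_of_sides \<tau>"
  assumes periodic: "\<And>k. \<tau> (k mod 5) = \<tau> k"
    and closure: "\<And>l. H l = dB * \<tau> (l + 3) + dA * \<tau> (l + 4)"
    and maxima: "\<And>m. m \<in> {2, 3, 4} \<Longrightarrow> H (i + m) \<le> H i \<and> H (i + m) \<le> H (i + 1)"
  shows "\<tau> k = \<tau> 0"
proof -
  define \<sigma> where "\<sigma> k = \<tau> (i + k)" for k
  have shift: "height_of_sides \<sigma> l = H (i + l)" for l
    by (simp add: \<sigma>_def H_def height_of_sides_def)
  have \<sigma>_periodic: "\<sigma> (k mod 5) = \<sigma> k" for k
    using periodic[of "i + k mod 5"] periodic[of "i + k"] by (simp add: \<sigma>_def mod_add_right_eq)
  have "height_of_sides \<sigma> m = height_of_sides \<sigma> 0" if "m < 5" for m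
    using that by (intro equal_heights_of_adjacent_maxima)
      (use closure maxima \<sigma>_periodic[of 5] in \<open>simp_all add: shift \<sigma>_def add.assoc\<close>)
  moreover have "height_of_sides \<sigma> (l mod 5) = height_of_sides \<sigma> l" for l
    using \<sigma>_periodic[of l] \<sigma>_periodic[of "l mod 5 + 1"] \<sigma>_periodic[of "l + 1"]
    by (simp add: height_of_sides_def mod_Suc_eq)
  ultimately have "height_of_sides \<sigma> (Suc l) = height_of_sides \<sigma> l" for l
    by (metis mod_less_divisor zero_less_numeral)
  hence \<sigma>_const: "\<sigma> k = \<sigma> 0" for k
    by (rule equal_sides_of_equal_heights[of \<sigma>, OF \<sigma>_periodic])
  have "\<tau> k = \<sigma> (k + 4 * i)" for k
    using periodic[of k] periodic[of "i + (k + 4 * i)"] by (simp add: \<sigma>_def)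
  thus ?thesis using \<sigma>_const by metis
qed

theorem lemma9:
  fixes P :: "(real^2) set" and i j :: nat
  assumes "parallel_pentagon P"
    and "i < 5" and "j < 5"
    and "j = Suc i mod 5 \<or> i = Suc j mod 5"
    and "\<forall>l<5. l \<noteq> i \<and> l \<noteq> j \<longrightarrow> height P l \<le> height P i \<and> height P l \<le> height P j"
  shows "regular_pentagon P"
proof -
  obtain q \<tau> s where "cyclic_pentagon q \<tau> s" and P: "P = convex hull (q ` {..<5})"
    using parallel_pentagon_cyclic[OF assms(1)] by blast
  then interpret cyclic_pentagon q \<tau> s by simp
  have heights: "height P k = height_of_sides \<tau> k" for k
    by (simp add: P height_pentagon)
  obtain i0 where "i0 < 5" and pair: "{i, j} = {i0, Suc i0 mod 5}"
    using assms(2-4) by blast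
  have "height_of_sides \<tau> (i0 + m) \<le> height_of_sides \<tau> i0
      \<and> height_of_sides \<tau> (i0 + m) \<le> height_of_sides \<tau> (i0 + 1)" if "m \<in> {2, 3, 4}" for m
  proof -
    have "(i0 + m) mod 5 \<notin> {i0, Suc i0 mod 5}" using that \<open>i0 < 5\<close> by (auto; presburger)
    hence "height P ((i0 + m) mod 5) \<le> height P i0 \<and> height P ((i0 + m) mod 5) \<le> height P (Suc i0 mod 5)"
      using assms(5) pair by (metis insert_iff mod_less_divisor zero_less_numeral doubleton_eq_iff)
    thus ?thesis by (simp add: height_mod heights)
  qed
  hence "\<tau> k = \<tau> 0" for k
    by (rule equal_sides_of_adjacent_maxima[OF side_mod closing_condition])
  thus ?thesis unfolding P by (rule regular_if_equal_sides)
qed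

end
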